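(* Let $\alpha_n$ be the minimal zero of $\phi_n(x)$, and for $n\ge2$ let $\beta_n,\gamma_n$ be the minimal zeros of $U^{\mathrm{e}}_n(x)$ and $S_n(x)$. Then $\alpha_0=1$, $\alpha_1=-\frac12$, and for $n\ge2$, $\alpha_n=\min\{\beta_n,\gamma_n\}$, which equals $\beta_n$ if $n$ is even and $\gamma_n$ if $n\ge3$ is odd.
   Context: $U_n(x)$ is the Chebyshev polynomial of the second kind ($U_n(\cos\theta)=\sin((n+1)\theta)/\sin\theta$), with $U_{-1}=0$. $\phi_n(x)=((n+1)x^2-3x-n)U_n(x)+(x+1)(U_{n-1}(x)+1)$. The partial Chebyshev polynomial $U^{\mathrm{e}}_n$ is the polynomial with $U^{\mathrm{e}}_n(\cos\theta)=\frac{\sin((n+1)\theta/2)}{\sin(\theta/2)}$ for even $n$ and $U^{\mathrm{e}}_n(\cos\theta)=\frac{\sin((n+1)\theta/2)}{\sin\theta}$ for odd $n$. For $n\ge0$, $S_{2n}(x)=(2nx+x+2n-1)U_n(x)-(2nx+3x+2n+1)U_{n-1}(x)$ and $S_{2n+1}(x)=2(2nx^2+2x^2+2nx-x-1)U_n(x)-2(2nx+3x+2n+1)U_{n-1}(x)$. *)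

theory Defs
  imports "HOL-Computational_Algebra.Polynomial" Complex_Main
begin

text \<open>Chebyshev polynomials of the second kind, U_0 = 1, U_1 = 2x,
  U_(n+2) = 2x U_(n+1) - U_n (so that U_n(cos t) = sin((n+1)t)/sin t).\<close>
fun cheb_U :: "nat \<Rightarrow> real poly" where
  "cheb_U 0 = 1"
| "cheb_U (Suc 0) = [:0, 2:]"
| "cheb_U (Suc (Suc n)) = [:0, 2:] * cheb_U (Suc n) - cheb_U n"

definition cheb_U_prev :: "nat \<Rightarrow> real poly" where
  "cheb_U_prev n = (if n = 0 then 0 else cheb_U (n - 1))"

definition phi :: "nat \<Rightarrow> real poly" where
  "phi n = [:- real n, -3, real n + 1:] * cheb_U n + [:1, 1:] * (cheb_U_prev n + 1)"

definition cheb_Ue :: "nat \<Rightarrow> real poly" where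
  "cheb_Ue n = (THE p. if even n
      then (\<forall>t. sin (t / 2) \<noteq> 0 \<longrightarrow>
              poly p (cos t) = sin ((real n + 1) * t / 2) / sin (t / 2))
      else (\<forall>t. sin t \<noteq> 0 \<longrightarrow>
              poly p (cos t) = sin ((real n + 1) * t / 2) / sin t))"

definition S_poly :: "nat \<Rightarrow> real poly" where
  "S_poly k = (let n = k div 2 in
     if even k then
       [:2 * real n - 1, 2 * real n + 1:] * cheb_U n
         - [:2 * real n + 1, 2 * real n + 3:] * cheb_U_prev n
     else
       smult 2 [:-1, 2 * real n - 1, 2 * real n + 2:] * cheb_U n
         - smult 2 [:2 * real n + 1, 2 * real n + 3:] * cheb_U_prev n)"

definition min_zero :: "real poly \<Rightarrow> real" where
  "min_zero p = Min {x. poly p x = 0}"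

end

theory Submission
  imports Defs "HOL-Analysis.Complex_Transcendental"
begin

text \<open>
  With \<open>A = U k\<close> and \<open>B = U (k - 1)\<close>, the addition formula
  \<open>U (m + n) = U m U n - U (m - 1) U (n - 1)\<close> and the identity \<open>A\<^sup>2 - 2 x A B + B\<^sup>2 = 1\<close>
  turn the definition of \<open>\<phi>\<^sub>n\<close> into the factorisation \<open>\<phi>\<^sub>n = (x - 1) U\<^sup>e\<^sub>n S\<^sub>n\<close>, so
  \<open>\<alpha>\<^sub>n\<close> is the least of \<open>1\<close>, \<open>\<beta>\<^sub>n\<close> and \<open>\<gamma>\<^sub>n\<close>. Since \<open>U\<^sup>e\<^sub>2\<^sub>k = U k + U (k - 1)\<close> and
  \<open>U\<^sup>e\<^sub>2\<^sub>k\<^sub>+\<^sub>1 = U k\<close>, their zeros are explicit cosines, the least being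
  \<open>\<beta>\<^sub>2\<^sub>k = cos (2 k \<pi> / (2 k + 1))\<close> and \<open>\<beta>\<^sub>2\<^sub>k\<^sub>+\<^sub>1 = cos (k \<pi> / (k + 1))\<close>.
  For even \<open>n\<close>, the value \<open>S\<^sub>2\<^sub>k (- cos 2s)\<close> is, up to sign, an explicit trigonometric
  expression that is negative for \<open>0 < s < \<pi> / (2 (2k + 1))\<close>; hence \<open>\<beta>\<^sub>n \<le> \<gamma>\<^sub>n\<close>.
  For odd \<open>n\<close>, \<open>S\<^sub>2\<^sub>k\<^sub>+\<^sub>1\<close> changes sign on
  \<open>[-1, - cos (\<pi> / (k + 2))]\<close>, an interval lying below \<open>\<beta>\<^sub>n\<close>; hence \<open>\<gamma>\<^sub>n \<le> \<beta>\<^sub>n\<close>.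
\<close>

section \<open>Chebyshev polynomials of the second kind\<close>

lemma cheb_U_prev_0 [simp]: "cheb_U_prev 0 = 0"
  by (simp add: cheb_U_prev_def)

lemma cheb_U_prev_Suc [simp]: "cheb_U_prev (Suc k) = cheb_U k"
  by (simp add: cheb_U_prev_def)

lemma cheb_U_Suc: "cheb_U (Suc k) = [:0, 2:] * cheb_U k - cheb_U_prev k"
  by (cases k) auto

lemma cheb_U_add: "cheb_U (m + n) = cheb_U m * cheb_U n - cheb_U_prev m * cheb_U_prev n"
proof (induction n rule: cheb_U.induct)
  case 1
  then show ?case by simp
next
  case 2
  then show ?case by (simp add: cheb_U_Suc mult.commute)
next
  case (3 n)
  have "cheb_U (m + Suc (Suc n)) = [:0, 2:] * cheb_U (m + Suc n) - cheb_U (m + n)"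
    by simp
  also have "\<dots> = cheb_U m * cheb_U (Suc (Suc n)) - cheb_U_prev m * cheb_U_prev (Suc (Suc n))"
    unfolding 3 cheb_U.simps cheb_U_prev_Suc cheb_U_Suc[of n] by algebra
  finally show ?case .
qed

lemma cheb_U_double: "cheb_U (2 * k) = cheb_U k ^ 2 - cheb_U_prev k ^ 2"
  unfolding mult_2 cheb_U_add power2_eq_square ..

lemma cheb_U_double_Suc:
  "cheb_U (2 * k + 1) = [:0, 2:] * cheb_U k ^ 2 - 2 * cheb_U k * cheb_U_prev k"
proof -
  have "cheb_U (2 * k + 1) = cheb_U (Suc k + k)"
    by (simp add: mult_2)
  also have "\<dots> = cheb_U (Suc k) * cheb_U k - cheb_U k * cheb_U_prev k"
    by (simp only: cheb_U_add cheb_U_prev_Suc)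
  finally show ?thesis
    unfolding cheb_U_Suc[of k] power2_eq_square by algebra
qed

lemma cheb_U_prev_double:
  "cheb_U_prev (2 * k) = 2 * cheb_U k * cheb_U_prev k - [:0, 2:] * cheb_U_prev k ^ 2"
proof (cases k)
  case (Suc j)
  have "cheb_U_prev (2 * k) = cheb_U (Suc j + j)"
    by (simp add: Suc cheb_U_prev_def mult_2)
  also have "\<dots> = cheb_U (Suc j) * cheb_U j - cheb_U j * cheb_U_prev j"
    by (simp only: cheb_U_add cheb_U_prev_Suc)
  finally show ?thesis
    unfolding Suc cheb_U_prev_Suc cheb_U_Suc[of j] power2_eq_square by algebra
qed simp

lemma cheb_U_cassini:
  "poly (cheb_U k) x ^ 2 - 2 * x * poly (cheb_U k) x * poly (cheb_U_prev k) x
     + poly (cheb_U_prev k) x ^ 2 = 1"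
proof (induction k)
  case (Suc k)
  then show ?case
    by (simp add: cheb_U_Suc algebra_simps power2_eq_square)
qed simp

lemma poly_cheb_U_minus: "poly (cheb_U n) (- x) = (-1) ^ n * poly (cheb_U n) x"
  by (induction n rule: cheb_U.induct) (auto simp: algebra_simps)

lemma poly_cheb_U_prev_minus: "poly (cheb_U_prev n) (- x) = - ((-1) ^ n * poly (cheb_U_prev n) x)"
  by (cases n) (auto simp: poly_cheb_U_minus)

lemma poly_cheb_U_1: "poly (cheb_U n) 1 = real n + 1"
  by (induction n rule: cheb_U.induct) (auto simp: algebra_simps)

lemma poly_cheb_U_prev_1: "poly (cheb_U_prev n) 1 = real n"
  by (cases n) (auto simp: poly_cheb_U_1)

lemma poly_cheb_U_ge_1:
  assumes "1 \<le> y"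
  shows "1 \<le> poly (cheb_U k) y \<and> poly (cheb_U k) y + 1 \<le> poly (cheb_U (Suc k)) y"
proof (induction k)
  case 0
  then show ?case using assms by simp
next
  case (Suc k)
  then have "poly (cheb_U (Suc k)) y \<le> y * poly (cheb_U (Suc k)) y"
    using assms by (intro mult_le_cancel_right1[THEN iffD2]) auto
  moreover have "poly (cheb_U (Suc (Suc k))) y = 2 * (y * poly (cheb_U (Suc k)) y) - poly (cheb_U k) y"
    by simp
  ultimately show ?case
    using Suc by linarith
qed

lemma poly_cheb_U_prev_ge_1: "k \<ge> 1 \<Longrightarrow> 1 \<le> y \<Longrightarrow> 1 \<le> poly (cheb_U_prev k) y"
  using poly_cheb_U_ge_1[of y] by (cases k) auto

lemma sin_add_eq_2cos_sin_minus: "sin ((x::real) + y) = 2 * cos y * sin x - sin (x - y)"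
  by (simp add: sin_add sin_diff)

lemma sin_mult_poly_cheb_U: "sin t * poly (cheb_U n) (cos t) = sin ((real n + 1) * t)"
proof (induction n rule: cheb_U.induct)
  case 2
  then show ?case by (simp add: sin_double)
next
  case (3 n)
  have "sin t * poly (cheb_U (Suc (Suc n))) (cos t)
      = 2 * cos t * (sin t * poly (cheb_U (Suc n)) (cos t)) - sin t * poly (cheb_U n) (cos t)"
    by (simp add: algebra_simps)
  also have "\<dots> = 2 * cos t * sin ((real n + 2) * t) - sin ((real n + 1) * t)"
    using 3 by (simp add: add.commute)
  also have "\<dots> = sin ((real n + 2) * t + t)"
    by (subst sin_add_eq_2cos_sin_minus) (simp add: algebra_simps)
  finally show ?case by (simp add: algebra_simps)
qed simp

definition cheb_V :: "nat \<Rightarrow> real poly" where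
  "cheb_V k = cheb_U k + cheb_U_prev k"

lemma sin_mult_poly_cheb_V: "sin h * poly (cheb_V k) (cos (2 * h)) = sin ((2 * real k + 1) * h)"
proof (induction k rule: cheb_U.induct)
  case 1
  then show ?case by (simp add: cheb_V_def)
next
  case 2
  have "sin (2 * h + h) = sin (2 * h) * cos h + cos (2 * h) * sin h"
    by (rule sin_add)
  also have "\<dots> = 2 * sin h * cos h ^ 2 + cos (2 * h) * sin h"
    by (simp only: sin_double power2_eq_square mult.assoc)
  also have "\<dots> = sin h * (2 * cos (2 * h) + 1)"
    unfolding cos_squared_eq cos_double_sin by (simp add: algebra_simps)
  finally have "sin (3 * h) = sin h * (2 * cos (2 * h) + 1)"
    by simp
  then show ?case by (simp add: cheb_V_def algebra_simps)
next
  case (3 n)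
  have rec: "cheb_V (Suc (Suc n)) = [:0, 2:] * cheb_V (Suc n) - cheb_V n"
    by (simp add: cheb_V_def cheb_U_Suc[of n] algebra_simps)
  have "sin h * poly (cheb_V (Suc (Suc n))) (cos (2 * h))
      = 2 * cos (2 * h) * (sin h * poly (cheb_V (Suc n)) (cos (2 * h)))
        - sin h * poly (cheb_V n) (cos (2 * h))"
    by (simp add: rec algebra_simps)
  also have "\<dots> = 2 * cos (2 * h) * sin ((2 * real n + 3) * h) - sin ((2 * real n + 1) * h)"
    using 3 by (simp add: algebra_simps)
  also have "\<dots> = sin ((2 * real n + 3) * h + 2 * h)"
    by (subst sin_add_eq_2cos_sin_minus) (simp add: algebra_simps)
  finally show ?case by (simp add: algebra_simps)
qed

lemma poly_eq_on_infinite: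
  fixes p q :: "'a::idom poly"
  assumes "infinite S" "\<And>x. x \<in> S \<Longrightarrow> poly p x = poly q x"
  shows "p = q"
proof (rule ccontr)
  assume "p \<noteq> q"
  then have "finite {x. poly (p - q) x = 0}"
    by (intro poly_roots_finite) simp
  moreover have "S \<subseteq> {x. poly (p - q) x = 0}"
    using assms(2) by auto
  ultimately show False
    using assms(1) finite_subset by blast
qed

lemma arccos_bounds:
  assumes "-1 < x" "x < 1"
  shows "0 < arccos x" "arccos x < pi" "cos (arccos x) = x"
  using arccos_lt_bounded[of x] assms by auto

lemma The_poly_cos_eqI:
  fixes q :: "real poly"
  assumes q: "\<forall>t. g t \<noteq> 0 \<longrightarrow> poly q (cos t) = F t"
    and g: "\<And>t. 0 < t \<Longrightarrow> t < pi \<Longrightarrow> g t \<noteq> 0"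
  shows "(THE p. \<forall>t. g t \<noteq> 0 \<longrightarrow> poly p (cos t) = F t) = q"
proof (rule the_equality)
  show "\<forall>t. g t \<noteq> 0 \<longrightarrow> poly q (cos t) = F t"
    by (fact q)
next
  fix p assume p: "\<forall>t. g t \<noteq> 0 \<longrightarrow> poly p (cos t) = F t"
  show "p = q"
  proof (rule poly_eq_on_infinite[of "{-1<..<1}"])
    fix x :: real assume "x \<in> {-1<..<1}"
    then have "0 < arccos x" "arccos x < pi" "cos (arccos x) = x"
      using arccos_bounds[of x] by auto
    then show "poly p x = poly q x"
      using p q g by metis
  qed simp
qed

lemma cheb_Ue_even: "cheb_Ue (2 * k) = cheb_V k"
proof -
  have "poly (cheb_V k) (cos t) = sin ((real (2 * k) + 1) * t / 2) / sin (t / 2)"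
    if "sin (t / 2) \<noteq> 0" for t
    using sin_mult_poly_cheb_V[of "t / 2" k] that by (simp add: field_simps)
  moreover have "sin (t / 2) \<noteq> 0" if "0 < t" "t < pi" for t
    using sin_gt_zero[of "t / 2"] that by simp
  moreover have "even (2 * k)"
    by simp
  ultimately show ?thesis
    unfolding cheb_Ue_def by (simp only: if_True) (rule The_poly_cos_eqI; blast)
qed

lemma cheb_Ue_odd: "cheb_Ue (2 * k + 1) = cheb_U k"
proof -
  have "poly (cheb_U k) (cos t) = sin ((real (2 * k + 1) + 1) * t / 2) / sin t"
    if "sin t \<noteq> 0" for t
  proof -
    have arg: "(real (2 * k + 1) + 1) * t / 2 = (real k + 1) * t"
      by (simp add: field_simps)
    show ?thesis
      unfolding arg using sin_mult_poly_cheb_U[of t k] that by (simp add: field_simps)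
  qed
  moreover have "sin t \<noteq> 0" if "0 < t" "t < pi" for t
    using sin_gt_zero[OF that] by simp
  moreover have "\<not> even (2 * k + 1)"
    by simp
  ultimately show ?thesis
    unfolding cheb_Ue_def by (simp only: if_False) (rule The_poly_cos_eqI; blast)
qed

section \<open>Factorisation of \<open>\<phi>\<^sub>n\<close>\<close>

lemma poly_phi_even:
  "poly (phi (2 * k)) x = (x - 1) * poly (cheb_Ue (2 * k)) x * poly (S_poly (2 * k)) x"
proof -
  define A where "A = poly (cheb_U k) x"
  define B where "B = poly (cheb_U_prev k) x"
  define r where "r = real k"
  have phi: "poly (phi (2 * k)) x
      = ((2 * r + 1) * x\<^sup>2 - 3 * x - 2 * r) * (A\<^sup>2 - B\<^sup>2) + (x + 1) * (2 * A * B - 2 * x * B\<^sup>2 + 1)"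
    unfolding phi_def cheb_U_double cheb_U_prev_double A_def B_def r_def
    by (simp add: algebra_simps power2_eq_square)
  have S: "poly (S_poly (2 * k)) x = ((2 * r - 1) + (2 * r + 1) * x) * A - ((2 * r + 1) + (2 * r + 3) * x) * B"
    unfolding S_poly_def A_def B_def r_def by (simp add: Let_def algebra_simps)
  have Ue: "poly (cheb_Ue (2 * k)) x = A + B"
    unfolding cheb_Ue_even cheb_V_def A_def B_def by simp
  have "poly (phi (2 * k)) x - (x - 1) * poly (cheb_Ue (2 * k)) x * poly (S_poly (2 * k)) x
      = (x + 1) * (1 - (A\<^sup>2 - 2 * x * A * B + B\<^sup>2))"
    unfolding phi S Ue by (simp add: algebra_simps power2_eq_square)
  then show ?thesis
    using cheb_U_cassini[of k x] by (simp add: A_def B_def)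
qed

lemma poly_phi_odd:
  "poly (phi (2 * k + 1)) x = (x - 1) * poly (cheb_Ue (2 * k + 1)) x * poly (S_poly (2 * k + 1)) x"
proof -
  define A where "A = poly (cheb_U k) x"
  define B where "B = poly (cheb_U_prev k) x"
  define r where "r = real k"
  have phi: "poly (phi (2 * k + 1)) x
      = ((2 * r + 2) * x\<^sup>2 - 3 * x - (2 * r + 1)) * (2 * x * A\<^sup>2 - 2 * A * B) + (x + 1) * (A\<^sup>2 - B\<^sup>2 + 1)"
  proof -
    have prev: "cheb_U_prev (2 * k + 1) = cheb_U (2 * k)"
      by (simp add: cheb_U_prev_def)
    show ?thesis
      unfolding phi_def prev cheb_U_double cheb_U_double_Suc A_def B_def r_def
      by (simp add: algebra_simps power2_eq_square)
  qed
  have S: "poly (S_poly (2 * k + 1)) x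
      = 2 * (-1 + (2 * r - 1) * x + (2 * r + 2) * x\<^sup>2) * A - 2 * ((2 * r + 1) + (2 * r + 3) * x) * B"
    unfolding S_poly_def A_def B_def r_def by (simp add: Let_def algebra_simps power2_eq_square)
  have Ue: "poly (cheb_Ue (2 * k + 1)) x = A"
    unfolding cheb_Ue_odd A_def ..
  have "poly (phi (2 * k + 1)) x - (x - 1) * poly (cheb_Ue (2 * k + 1)) x * poly (S_poly (2 * k + 1)) x
      = (x + 1) * (1 - (A\<^sup>2 - 2 * x * A * B + B\<^sup>2))"
    unfolding phi S Ue by (simp add: algebra_simps power2_eq_square)
  then show ?thesis
    using cheb_U_cassini[of k x] by (simp add: A_def B_def)
qed

lemma poly_phi_eq_0_iff:
  "poly (phi n) x = 0 \<longleftrightarrow> x = 1 \<or> poly (cheb_Ue n) x = 0 \<or> poly (S_poly n) x = 0"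
proof -
  obtain k where "n = 2 * k \<or> n = 2 * k + 1"
    by (metis oddE evenE)
  then have "poly (phi n) x = (x - 1) * poly (cheb_Ue n) x * poly (S_poly n) x"
    using poly_phi_even poly_phi_odd by auto
  then show ?thesis
    by simp
qed

lemma min_zero_eqI:
  assumes "p \<noteq> 0" "poly p m = 0" "\<And>x. poly p x = 0 \<Longrightarrow> m \<le> x"
  shows "min_zero p = m"
  unfolding min_zero_def using assms poly_roots_finite[OF assms(1)]
  by (intro Min_eqI) auto

lemma min_zero_le:
  assumes "p \<noteq> 0" "poly p x = 0"
  shows "min_zero p \<le> x"
  unfolding min_zero_def using assms poly_roots_finite[OF assms(1)] by simp

lemma poly_min_zero:
  assumes "p \<noteq> 0" "poly p x = 0"
  shows "poly p (min_zero p) = 0"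
proof -
  have "min_zero p \<in> {x. poly p x = 0}"
    unfolding min_zero_def using assms poly_roots_finite[OF assms(1)]
    by (intro Min_in) auto
  then show ?thesis
    by simp
qed

lemma sin_ne_zero_between_multiples_pi:
  assumes "real m * pi < y" "y < (real m + 1) * pi"
  shows "sin y \<noteq> 0"
proof
  assume "sin y = 0"
  then obtain i :: int where i: "y = of_int i * pi"
    using sin_zero_iff_int2 by blast
  have "real m < of_int i" "of_int i < real m + 1"
    using assms unfolding i by simp_all
  then have "int m < i" "i < int m + 1"
    by linarith+
  then show False
    by linarith
qed

definition cheb_U_min_root :: "nat \<Rightarrow> real" where
  "cheb_U_min_root k = cos (real k * pi / (real k + 1))"

definition cheb_V_min_root :: "nat \<Rightarrow> real" where
  "cheb_V_min_root k = cos (2 * real k * pi / (2 * real k + 1))"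

lemma poly_cheb_U_min_root:
  assumes "k \<ge> 1"
  shows "poly (cheb_U k) (cheb_U_min_root k) = 0"
proof -
  define t where "t = real k * pi / (real k + 1)"
  have "0 < t" "t < pi"
    using assms by (auto simp: t_def field_simps)
  then have "sin t \<noteq> 0"
    using sin_gt_zero by fastforce
  moreover have "(real k + 1) * t = real k * pi"
    by (simp add: t_def field_simps)
  ultimately show ?thesis
    using sin_mult_poly_cheb_U[of t k] by (simp add: cheb_U_min_root_def t_def[symmetric])
qed

lemma poly_cheb_U_ne_0_below:
  assumes "x < cheb_U_min_root k"
  shows "poly (cheb_U k) x \<noteq> 0"
proof (cases "x \<le> -1")
  case True
  then have "1 \<le> poly (cheb_U k) (- x)"
    using poly_cheb_U_ge_1[of "- x" k] by auto
  then show ?thesis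
    using poly_cheb_U_minus[of k "- x"] by auto
next
  case False
  define t0 where "t0 = real k * pi / (real k + 1)"
  have t0: "0 \<le> t0" "t0 \<le> pi"
    by (auto simp: t0_def field_simps)
  have "x < cos t0"
    using assms by (simp add: cheb_U_min_root_def t0_def)
  then have "x < 1"
    using cos_le_one[of t0] by linarith
  define t where "t = arccos x"
  have t: "0 < t" "t < pi" "cos t = x"
    using arccos_bounds[of x] False \<open>x < 1\<close> by (auto simp: t_def)
  then have "t0 < t"
    using \<open>x < cos t0\<close> t0 cos_mono_less_eq by auto
  then have "real k * pi < (real k + 1) * t"
    by (simp add: t0_def field_simps)
  moreover have "(real k + 1) * t < (real k + 1) * pi"
    using t by simp
  ultimately have "sin ((real k + 1) * t) \<noteq> 0"
    by (rule sin_ne_zero_between_multiples_pi)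
  then show ?thesis
    using sin_mult_poly_cheb_U[of t k] t by auto
qed

lemma poly_cheb_V_min_root:
  assumes "k \<ge> 1"
  shows "poly (cheb_V k) (cheb_V_min_root k) = 0"
proof -
  define h where "h = real k * pi / (2 * real k + 1)"
  have "0 < h" "h < pi"
    using assms by (auto simp: h_def field_simps add_pos_nonneg)
  then have "sin h \<noteq> 0"
    using sin_gt_zero by fastforce
  moreover have "(2 * real k + 1) * h = real k * pi"
    by (simp add: h_def field_simps)
  moreover have "cheb_V_min_root k = cos (2 * h)"
    by (simp add: cheb_V_min_root_def h_def mult.assoc)
  ultimately show ?thesis
    using sin_mult_poly_cheb_V[of h k] by simp
qed

lemma poly_cheb_V_ne_0_below:
  assumes "k \<ge> 1" "x < cheb_V_min_root k"
  shows "poly (cheb_V k) x \<noteq> 0"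
proof (cases "x \<le> -1")
  case True
  obtain j where j: "k = Suc j"
    using assms(1) by (cases k) auto
  have "poly (cheb_U j) (- x) + 1 \<le> poly (cheb_U k) (- x)"
    using poly_cheb_U_ge_1[of "- x" j] True j by auto
  moreover have "poly (cheb_V k) x = (-1) ^ k * (poly (cheb_U k) (- x) - poly (cheb_U j) (- x))"
    using poly_cheb_U_minus[of k "- x"] poly_cheb_U_minus[of j "- x"]
    by (simp add: cheb_V_def j algebra_simps)
  ultimately show ?thesis
    by auto
next
  case False
  define t0 where "t0 = 2 * real k * pi / (2 * real k + 1)"
  have t0: "0 \<le> t0" "t0 \<le> pi"
    by (auto simp: t0_def field_simps)
  have "x < cos t0"
    using assms(2) by (simp add: cheb_V_min_root_def t0_def)
  then have "x < 1"
    using cos_le_one[of t0] by linarith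
  define t where "t = arccos x"
  have t: "0 < t" "t < pi" "cos t = x"
    using arccos_bounds[of x] False \<open>x < 1\<close> by (auto simp: t_def)
  then have "t0 < t"
    using \<open>x < cos t0\<close> t0 cos_mono_less_eq by auto
  then have "real k * pi < (2 * real k + 1) * (t / 2)"
    by (simp add: t0_def field_simps)
  moreover have "(2 * real k + 1) * (t / 2) < (real k + 1) * pi"
  proof -
    have "(2 * real k + 1) * t < (2 * real k + 1) * pi"
      using t by (intro mult_strict_left_mono) auto
    then show ?thesis
      by (simp add: field_simps) (use pi_gt_zero in linarith)
  qed
  ultimately have "sin ((2 * real k + 1) * (t / 2)) \<noteq> 0"
    by (rule sin_ne_zero_between_multiples_pi)
  then show ?thesis
    using sin_mult_poly_cheb_V[of "t / 2" k] t by auto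
qed

lemma min_zero_cheb_U:
  assumes "k \<ge> 1"
  shows "min_zero (cheb_U k) = cheb_U_min_root k"
proof (rule min_zero_eqI)
  show "cheb_U k \<noteq> 0"
    using poly_cheb_U_ne_0_below[of "cheb_U_min_root k - 1" k] by auto
  show "cheb_U_min_root k \<le> x" if "poly (cheb_U k) x = 0" for x
    using poly_cheb_U_ne_0_below[of x k] that by force
qed (rule poly_cheb_U_min_root[OF assms])

lemma min_zero_cheb_V:
  assumes "k \<ge> 1"
  shows "min_zero (cheb_V k) = cheb_V_min_root k"
proof (rule min_zero_eqI)
  show "cheb_V k \<noteq> 0"
    using poly_cheb_V_ne_0_below[OF assms, of "cheb_V_min_root k - 1"] by auto
  show "cheb_V_min_root k \<le> x" if "poly (cheb_V k) x = 0" for x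
    using poly_cheb_V_ne_0_below[OF assms, of x] that by force
qed (rule poly_cheb_V_min_root[OF assms])

section \<open>The even case\<close>

definition S_even_mirror :: "nat \<Rightarrow> real \<Rightarrow> real" where
  "S_even_mirror k y = (2 * real k - 1 - (2 * real k + 1) * y) * poly (cheb_U k) y
                     + (2 * real k + 1 - (2 * real k + 3) * y) * poly (cheb_U_prev k) y"

lemma poly_S_poly_even_minus: "poly (S_poly (2 * k)) (- y) = (-1) ^ k * S_even_mirror k y"
  unfolding S_poly_def S_even_mirror_def Let_def
  by (simp add: poly_cheb_U_minus poly_cheb_U_prev_minus algebra_simps)

lemma poly_S_poly_even_1: "poly (S_poly (2 * k)) 1 = 0"
  unfolding S_poly_def Let_def by (simp add: poly_cheb_U_1 poly_cheb_U_prev_1 algebra_simps)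

lemma S_even_mirror_neg:
  assumes "k \<ge> 1" "y \<ge> 1"
  shows "S_even_mirror k y < 0"
proof -
  have "0 < poly (cheb_U k) y"
    using poly_cheb_U_ge_1[OF assms(2), of k] by simp
  moreover have "0 < poly (cheb_U_prev k) y"
    using poly_cheb_U_prev_ge_1[OF assms] by simp
  moreover have "2 * real k - 1 - (2 * real k + 1) * y < 0"
  proof -
    have "(2 * real k + 1) * 1 \<le> (2 * real k + 1) * y"
      using assms(2) by (intro mult_left_mono) auto
    then show ?thesis
      by (smt (verit))
  qed
  moreover have "2 * real k + 1 - (2 * real k + 3) * y < 0"
  proof -
    have "(2 * real k + 3) * 1 \<le> (2 * real k + 3) * y"
      using assms(2) by (intro mult_left_mono) auto
    then show ?thesis
      by (smt (verit))
  qed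
  ultimately show ?thesis
    unfolding S_even_mirror_def by (smt (verit) mult_neg_pos)
qed

lemma sin_mult_S_even_mirror:
  fixes s :: real
  assumes "k \<ge> 1"
  defines "T \<equiv> (2 * real k + 1) * s"
  shows "sin (2 * s) * S_even_mirror k (cos (2 * s))
       = 4 * (sin T * cos s * ((2 * real k + 1) * sin s ^ 2 - cos s ^ 2) - cos T * sin s ^ 3)"
proof -
  obtain j where j: "k = Suc j"
    using assms(1) by (cases k) auto
  have U: "sin (2 * s) * poly (cheb_U k) (cos (2 * s)) = sin (T + s)"
    using sin_mult_poly_cheb_U[of "2 * s" k] by (simp add: T_def algebra_simps)
  have P: "sin (2 * s) * poly (cheb_U_prev k) (cos (2 * s)) = sin (T - s)"
    using sin_mult_poly_cheb_U[of "2 * s" j] by (simp add: j T_def algebra_simps)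
  define r where "r = real k"
  have "sin (2 * s) * S_even_mirror k (cos (2 * s))
      = (2 * r - 1 - (2 * r + 1) * cos (2 * s)) * sin (T + s)
      + (2 * r + 1 - (2 * r + 3) * cos (2 * s)) * sin (T - s)"
    unfolding S_even_mirror_def r_def U[symmetric] P[symmetric] by (simp add: algebra_simps)
  also have "\<dots> = (2 * r - 1 - (2 * r + 1) * (cos s ^ 2 - sin s ^ 2)) * (sin T * cos s + cos T * sin s)
      + (2 * r + 1 - (2 * r + 3) * (cos s ^ 2 - sin s ^ 2)) * (sin T * cos s - cos T * sin s)"
    by (simp only: sin_add sin_diff cos_double)
  also have "\<dots> = 4 * (sin T * cos s * ((2 * r + 1) * sin s ^ 2 - cos s ^ 2) - cos T * sin s ^ 3)"
    unfolding cos_squared_eq by (simp add: algebra_simps power2_eq_square power3_eq_cube)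
  finally show ?thesis
    by (simp add: r_def)
qed

lemma mult_sin_sq_less_cos_sq:
  fixes N s :: real
  assumes N: "5 \<le> N" and s: "0 < s" "s < pi / (2 * N)"
  shows "N * sin s ^ 2 < cos s ^ 2"
proof -
  have "pi / (2 * N) \<le> pi"
    using N by (simp add: field_simps)
  then have "0 \<le> sin s"
    using s by (intro sin_ge_zero) auto
  have "sin s \<le> s"
    using s by (intro sin_x_le_x) auto
  also have "s < 4 / (2 * N)"
    using s pi_less_4 N by (smt (verit) divide_right_mono)
  finally have "sin s ^ 2 < (2 / N) ^ 2"
    using \<open>0 \<le> sin s\<close> by (intro power_strict_mono) auto
  then have "N * sin s ^ 2 < N * (2 / N) ^ 2" "sin s ^ 2 < 4 / N ^ 2"
    using N by (auto simp: power_divide simp del: times_divide_eq_right)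
  moreover have "N * (2 / N) ^ 2 = 4 / N" "4 / N \<le> 4 / 5" "4 / N ^ 2 \<le> 4 / 25"
    using N mult_mono[of 5 N 5 N] by (auto simp: power2_eq_square field_simps)
  ultimately show ?thesis
    using cos_squared_eq[of s] by linarith
qed

lemma S_even_mirror_cos_neg:
  assumes k: "k \<ge> 2" and s: "0 < s" "s < pi / (2 * (2 * real k + 1))"
  shows "S_even_mirror k (cos (2 * s)) < 0"
proof -
  define T where "T = (2 * real k + 1) * s"
  have "0 < T"
    using s by (simp add: T_def)
  moreover have "T < pi / 2"
    using s by (simp add: T_def field_simps)
  ultimately have "sin T > 0" "cos T > 0"
    by (auto intro: sin_gt_zero cos_gt_zero)
  have "pi / (2 * (2 * real k + 1)) \<le> pi / 4"
    using k by (intro divide_left_mono) auto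
  then have "0 < 2 * s" "2 * s < pi / 2"
    using s by linarith+
  then have "sin s > 0" "cos s > 0" "sin (2 * s) > 0"
    by (auto intro: sin_gt_zero cos_gt_zero)
  have "(2 * real k + 1) * sin s ^ 2 < cos s ^ 2"
    using k s by (intro mult_sin_sq_less_cos_sq) auto
  then have "sin T * cos s * ((2 * real k + 1) * sin s ^ 2 - cos s ^ 2) < 0"
    using \<open>sin T > 0\<close> \<open>cos s > 0\<close> by (intro mult_pos_neg) auto
  moreover have "cos T * sin s ^ 3 > 0"
    using \<open>cos T > 0\<close> \<open>sin s > 0\<close> by simp
  ultimately have "sin (2 * s) * S_even_mirror k (cos (2 * s)) < 0"
    unfolding sin_mult_S_even_mirror[OF order.trans[OF one_le_numeral k], of s] T_def[symmetric]
    by simp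
  then show ?thesis
    using \<open>sin (2 * s) > 0\<close> by (simp add: mult_less_0_iff)
qed

lemma cheb_V_min_root_1: "cheb_V_min_root 1 = -1 / 2"
proof -
  have "cheb_V_min_root 1 = cos (2 * (pi / 3))"
    by (simp add: cheb_V_min_root_def)
  also have "\<dots> = 2 * cos (pi / 3) ^ 2 - 1"
    by (rule cos_double_cos)
  also have "\<dots> = -1 / 2"
    by (simp add: cos_60 power2_eq_square)
  finally show ?thesis .
qed

lemma poly_S_poly_2: "poly (S_poly 2) x = 3 * (2 * x + 1) * (x - 1)"
  by (simp add: S_poly_def numeral_2_eq_2 algebra_simps)

lemma poly_S_poly_even_ne_0_below:
  assumes k: "k \<ge> 1" and x: "x < cheb_V_min_root k"
  shows "poly (S_poly (2 * k)) x \<noteq> 0"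
proof -
  consider "k = 1" | "x \<le> -1" | "k \<ge> 2" "-1 < x"
    using k by linarith
  then show ?thesis
  proof cases
    case 1
    then show ?thesis
      using x cheb_V_min_root_1 poly_S_poly_2 by auto
  next
    case 2
    then show ?thesis
      using S_even_mirror_neg[OF k, of "- x"] poly_S_poly_even_minus[of k "- x"] by auto
  next
    case 3
    define t0 where "t0 = 2 * real k * pi / (2 * real k + 1)"
    have t0: "0 \<le> t0" "t0 \<le> pi"
      by (auto simp: t0_def field_simps)
    have "x < cos t0"
      using x by (simp add: cheb_V_min_root_def t0_def)
    then have "x < 1"
      using cos_le_one[of t0] by linarith
    define t where "t = arccos x"
    have t: "0 < t" "t < pi" "cos t = x"
      using arccos_bounds[of x] 3 \<open>x < 1\<close> by (auto simp: t_def)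
    then have "t0 < t"
      using \<open>x < cos t0\<close> t0 cos_mono_less_eq by auto
    define s where "s = (pi - t) / 2"
    have "0 < s" "s < pi / (2 * (2 * real k + 1))"
      using t \<open>t0 < t\<close> by (auto simp: s_def t0_def field_simps)
    then have "S_even_mirror k (cos (2 * s)) < 0"
      by (rule S_even_mirror_cos_neg[OF \<open>k \<ge> 2\<close>])
    moreover have "2 * s = pi - t"
      by (simp add: s_def)
    then have "x = - cos (2 * s)"
      using t by simp
    ultimately show ?thesis
      using poly_S_poly_even_minus[of k "cos (2 * s)"] by auto
  qed
qed

section \<open>The odd case\<close>

definition S_odd_mirror :: "nat \<Rightarrow> real \<Rightarrow> real" where
  "S_odd_mirror k y = ((2 * real k + 2) * y\<^sup>2 - (2 * real k - 1) * y - 1) * poly (cheb_U k) y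
                    + (2 * real k + 1 - (2 * real k + 3) * y) * poly (cheb_U_prev k) y"

lemma poly_S_poly_odd_minus: "poly (S_poly (2 * k + 1)) (- y) = 2 * (-1) ^ k * S_odd_mirror k y"
  unfolding S_poly_def S_odd_mirror_def Let_def
  by (simp add: poly_cheb_U_minus poly_cheb_U_prev_minus algebra_simps power2_eq_square)

lemma S_odd_mirror_1: "S_odd_mirror k 1 = 2"
  unfolding S_odd_mirror_def by (simp add: poly_cheb_U_1 poly_cheb_U_prev_1 algebra_simps)

text \<open>At \<open>c = cos (pi / (k + 2))\<close>, the largest zero of \<open>U (k + 1)\<close>, we have
  \<open>U k c = 1\<close> and \<open>U (k - 1) c = 2 c\<close>.\<close>
lemma S_odd_mirror_cos_pi_div:
  fixes k :: nat
  defines "c \<equiv> cos (pi / (real k + 2))"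
  shows "S_odd_mirror k c = - ((2 * real k + 4) * c\<^sup>2 - (2 * real k + 3) * c + 1)"
proof -
  define a where "a = pi / (real k + 2)"
  have "0 < a" "a < pi"
    by (auto simp: a_def field_simps add_pos_nonneg)
  then have "sin a \<noteq> 0"
    using sin_gt_zero by fastforce
  have "(real (Suc k) + 1) * a = pi" "(real k + 1) * a = pi - a"
    by (simp_all add: a_def field_simps)
  then have "poly (cheb_U (Suc k)) c = 0" "poly (cheb_U k) c = 1"
    using sin_mult_poly_cheb_U[of a "Suc k"] sin_mult_poly_cheb_U[of a k] \<open>sin a \<noteq> 0\<close>
    by (simp_all add: c_def a_def)
  moreover have "poly (cheb_U (Suc k)) c = 2 * c * poly (cheb_U k) c - poly (cheb_U_prev k) c"
    by (simp add: cheb_U_Suc)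
  ultimately have "poly (cheb_U_prev k) c = 2 * c"
    by simp
  then show ?thesis
    unfolding S_odd_mirror_def \<open>poly (cheb_U k) c = 1\<close> by (simp add: algebra_simps power2_eq_square)
qed

lemma one_minus_cos_le: "1 - cos (a :: real) \<le> a\<^sup>2 / 2"
proof -
  have "1 - cos a = 2 * sin (a / 2) ^ 2"
    using cos_double_sin[of "a / 2"] by simp
  moreover have "sin (a / 2) ^ 2 \<le> (a / 2)\<^sup>2"
    using abs_sin_x_le_abs_x[of "a / 2"] abs_le_square_iff by blast
  ultimately show ?thesis
    by (simp add: power2_eq_square)
qed

lemma pi_sq_less_10: "pi\<^sup>2 < 10"
proof -
  have "pi\<^sup>2 \<le> 3.1415926535899\<^sup>2"
    using pi_approx(2) by (intro power_mono) auto
  moreover have "(3.1415926535899 :: real)\<^sup>2 < 10"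
    by (simp add: power2_eq_square)
  ultimately show ?thesis
    by linarith
qed

lemma cos_pi_div_quadratic_nonneg:
  fixes k :: nat
  assumes "k \<ge> 1"
  defines "c \<equiv> cos (pi / (real k + 2))"
  shows "0 \<le> (2 * real k + 4) * c\<^sup>2 - (2 * real k + 3) * c + 1"
proof -
  have one_minus_c: "1 - c \<le> pi\<^sup>2 / (2 * (real k + 2)\<^sup>2)"
    using one_minus_cos_le[of "pi / (real k + 2)"] by (simp add: c_def power_divide)
  consider "k = 1" | "k = 2" | "k = 3" | "k \<ge> 4"
    using assms(1) by linarith
  then show ?thesis
  proof cases
    case 1
    then have c: "c = 1 / 2"
      by (simp add: c_def cos_60)
    show ?thesis
      unfolding c using 1 by (simp add: power2_eq_square)
  next
    case 2
    then have c: "c = sqrt 2 / 2"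
      by (simp add: c_def cos_45)
    have "sqrt 2 \<le> sqrt ((10 / 7)\<^sup>2)"
      by (simp add: power2_eq_square)
    then have "c \<le> 5 / 7"
      unfolding c by simp
    moreover have "c\<^sup>2 = 1 / 2"
      unfolding c by (simp add: power_divide)
    ultimately show ?thesis
      using 2 by simp
  next
    case 3
    then have "c \<ge> 4 / 5"
      using one_minus_c pi_sq_less_10 by simp
    moreover have "(2 * real k + 4) * c\<^sup>2 - (2 * real k + 3) * c + 1
        = (c - 4 / 5) * (10 * c - 1) + 1 / 5"
      using 3 by (simp add: field_simps power2_eq_square)
    ultimately show ?thesis
      by simp
  next
    case 4
    define r where "r = real k"
    define u where "u = 1 - c"
    have "r \<ge> 4"
      using 4 by (simp add: r_def)
    have "(2 * r + 5) * pi\<^sup>2 \<le> (2 * r + 5) * 10"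
      using pi_sq_less_10 \<open>r \<ge> 4\<close> by (intro mult_left_mono) auto
    also have "\<dots> \<le> 4 * (r + 2)\<^sup>2"
    proof -
      have "4 * r \<le> r * r"
        using \<open>r \<ge> 4\<close> by (intro mult_right_mono) auto
      then have "(2 * r + 5) * 10 \<le> 4 * (r * r + 4 * r + 4)"
        using \<open>r \<ge> 4\<close> by (smt (z3))
      then show ?thesis
        by (simp add: power2_eq_square algebra_simps)
    qed
    finally have "(2 * r + 5) * (pi\<^sup>2 / (2 * (r + 2)\<^sup>2)) \<le> 2"
      using \<open>r \<ge> 4\<close> by (simp add: field_simps)
    moreover have "(2 * r + 5) * u \<le> (2 * r + 5) * (pi\<^sup>2 / (2 * (r + 2)\<^sup>2))"
      using one_minus_c \<open>r \<ge> 4\<close> by (intro mult_left_mono) (auto simp: u_def r_def)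
    moreover have "(2 * real k + 4) * c\<^sup>2 - (2 * real k + 3) * c + 1 = 2 - (2 * r + 5) * u + (2 * r + 4) * u\<^sup>2"
      by (simp add: u_def r_def algebra_simps power2_eq_square)
    moreover have "0 \<le> (2 * r + 4) * u\<^sup>2"
      using \<open>r \<ge> 4\<close> by simp
    ultimately show ?thesis
      by linarith
  qed
qed

lemma poly_S_poly_odd_zero_le:
  assumes "k \<ge> 1"
  shows "\<exists>x \<le> cheb_U_min_root k. poly (S_poly (2 * k + 1)) x = 0"
proof -
  define c where "c = cos (pi / (real k + 2))"
  define f where "f x = (-1) ^ k * poly (S_poly (2 * k + 1)) x" for x
  have sign: "(-1 :: real) ^ k * (-1) ^ k = 1"
    by (simp flip: power_add mult_2)
  have "f (- 1) = 4"
    using poly_S_poly_odd_minus[of k 1] S_odd_mirror_1[of k] sign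
    by (simp add: f_def mult.assoc[symmetric])
  moreover have "f (- c) \<le> 0"
    using poly_S_poly_odd_minus[of k c] S_odd_mirror_cos_pi_div[of k]
      cos_pi_div_quadratic_nonneg[OF assms] sign
    by (simp add: f_def c_def mult.assoc[symmetric])
  moreover have "c \<le> 1"
    by (simp add: c_def)
  moreover have "continuous_on {- 1 .. - c} f"
    unfolding f_def by (intro continuous_intros)
  ultimately obtain x where x: "- 1 \<le> x" "x \<le> - c" "f x = 0"
    using IVT2'[of f "- c" 0 "- 1"] by auto
  have "cos (pi / (real k + 1)) \<le> c"
    unfolding c_def by (intro cos_monotone_0_pi_le) (auto simp: field_simps)
  moreover have "cheb_U_min_root k = - cos (pi / (real k + 1))"
  proof -
    have "real k * pi / (real k + 1) = pi - pi / (real k + 1)"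
      by (simp add: field_simps)
    then show ?thesis
      by (simp add: cheb_U_min_root_def)
  qed
  ultimately show ?thesis
    using x by (intro exI[of _ x]) (auto simp: f_def)
qed

lemma min_zero_phi_even:
  assumes k: "k \<ge> 1"
  shows "min_zero (phi (2 * k)) = min_zero (cheb_Ue (2 * k))"
    and "min_zero (cheb_Ue (2 * k)) \<le> min_zero (S_poly (2 * k))"
proof -
  let ?\<beta> = "cheb_V_min_root k"
  have below: "poly (cheb_V k) x \<noteq> 0" "poly (S_poly (2 * k)) x \<noteq> 0" if "x < ?\<beta>" for x
    using poly_cheb_V_ne_0_below[OF k that] poly_S_poly_even_ne_0_below[OF k that] by auto
  have "?\<beta> \<le> 1"
    by (simp add: cheb_V_min_root_def)
  have "S_poly (2 * k) \<noteq> 0"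
    using below(2)[of "?\<beta> - 1"] by auto
  then have "?\<beta> \<le> min_zero (S_poly (2 * k))"
    using poly_min_zero[OF _ poly_S_poly_even_1] below(2) by force
  moreover have "min_zero (phi (2 * k)) = ?\<beta>"
  proof (rule min_zero_eqI)
    show "phi (2 * k) \<noteq> 0"
      using below[of "?\<beta> - 1"] \<open>?\<beta> \<le> 1\<close> poly_phi_eq_0_iff[of "2 * k" "?\<beta> - 1"]
      by (auto simp: cheb_Ue_even)
    show "poly (phi (2 * k)) ?\<beta> = 0"
      using poly_cheb_V_min_root[OF k] by (simp add: poly_phi_eq_0_iff cheb_Ue_even)
    show "?\<beta> \<le> x" if "poly (phi (2 * k)) x = 0" for x
      using that below \<open>?\<beta> \<le> 1\<close> by (force simp: poly_phi_eq_0_iff cheb_Ue_even)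
  qed
  ultimately show "min_zero (phi (2 * k)) = min_zero (cheb_Ue (2 * k))"
    and "min_zero (cheb_Ue (2 * k)) \<le> min_zero (S_poly (2 * k))"
    by (simp_all add: cheb_Ue_even min_zero_cheb_V[OF k])
qed

lemma min_zero_phi_odd:
  assumes k: "k \<ge> 1"
  shows "min_zero (phi (2 * k + 1)) = min_zero (S_poly (2 * k + 1))"
    and "min_zero (S_poly (2 * k + 1)) \<le> min_zero (cheb_Ue (2 * k + 1))"
proof -
  let ?\<beta> = "cheb_U_min_root k"
  let ?S = "S_poly (2 * k + 1)"
  obtain x0 where x0: "x0 \<le> ?\<beta>" "poly ?S x0 = 0"
    using poly_S_poly_odd_zero_le[OF k] by blast
  have "poly ?S (- 1) \<noteq> 0"
    using poly_S_poly_odd_minus[of k 1] S_odd_mirror_1[of k] by simp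
  then have "?S \<noteq> 0"
    by auto
  define \<gamma> where "\<gamma> = min_zero ?S"
  have "poly ?S \<gamma> = 0" "\<gamma> \<le> x0"
    unfolding \<gamma>_def using poly_min_zero min_zero_le \<open>?S \<noteq> 0\<close> x0(2) by blast+
  have "?\<beta> \<le> 1"
    by (simp add: cheb_U_min_root_def)
  have "min_zero (phi (2 * k + 1)) = \<gamma>"
  proof (rule min_zero_eqI)
    show "phi (2 * k + 1) \<noteq> 0"
    proof -
      have "poly (cheb_Ue (2 * k + 1)) (- 1) \<noteq> 0"
        unfolding cheb_Ue_odd using poly_cheb_U_minus[of k 1] by (simp add: poly_cheb_U_1)
      then show ?thesis
        using \<open>poly ?S (- 1) \<noteq> 0\<close> poly_phi_eq_0_iff[of "2 * k + 1" "- 1"] by auto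
    qed
    show "poly (phi (2 * k + 1)) \<gamma> = 0"
      using \<open>poly ?S \<gamma> = 0\<close> by (simp add: poly_phi_eq_0_iff)
    show "\<gamma> \<le> x" if root: "poly (phi (2 * k + 1)) x = 0" for x
    proof -
      have "x = 1 \<or> poly (cheb_U k) x = 0 \<or> poly ?S x = 0"
        using root unfolding poly_phi_eq_0_iff cheb_Ue_odd .
      moreover have "?\<beta> \<le> x" if "poly (cheb_U k) x = 0"
        using poly_cheb_U_ne_0_below[of x k] that by force
      ultimately show ?thesis
        using min_zero_le[OF \<open>?S \<noteq> 0\<close>, of x] \<open>?\<beta> \<le> 1\<close> x0 \<open>\<gamma> \<le> x0\<close>
        unfolding \<gamma>_def by force
    qed
  qed
  then show "min_zero (phi (2 * k + 1)) = min_zero ?S"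
    by (simp add: \<gamma>_def)
  show "min_zero ?S \<le> min_zero (cheb_Ue (2 * k + 1))"
    unfolding cheb_Ue_odd min_zero_cheb_U[OF k] using \<open>\<gamma> \<le> x0\<close> x0(1) by (simp add: \<gamma>_def)
qed

lemma min_zero_phi_0: "min_zero (phi 0) = 1"
proof -
  have phi: "poly (phi 0) x = (x - 1)\<^sup>2" for x
    by (simp add: phi_def algebra_simps power2_eq_square)
  show ?thesis
  proof (rule min_zero_eqI)
    show "phi 0 \<noteq> 0"
      using phi[of 0] by auto
  qed (auto simp: phi)
qed

lemma min_zero_phi_1: "min_zero (phi 1) = - 1 / 2"
proof -
  have phi: "poly (phi 1) x = 2 * (x - 1)\<^sup>2 * (2 * x + 1)" for x
    by (simp add: phi_def algebra_simps power2_eq_square)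
  show ?thesis
  proof (rule min_zero_eqI)
    show "phi 1 \<noteq> 0"
      using phi[of 0] by auto
    show "poly (phi 1) (- 1 / 2) = 0"
      using phi[of "- 1 / 2"] by simp
    show "- 1 / 2 \<le> x" if "poly (phi 1) x = 0" for x
      using phi[of x] that by auto
  qed
qed

theorem mainTheorem18:
  shows "min_zero (phi 0) = 1 \<and> min_zero (phi 1) = - 1 / 2 \<and>
    (\<forall>n\<ge>2. min_zero (phi n) = min (min_zero (cheb_Ue n)) (min_zero (S_poly n)) \<and>
       (even n \<longrightarrow> min_zero (phi n) = min_zero (cheb_Ue n)) \<and>
       (odd n \<longrightarrow> min_zero (phi n) = min_zero (S_poly n)))"
proof -
  have "min_zero (phi n) = min (min_zero (cheb_Ue n)) (min_zero (S_poly n)) \<and>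
      (even n \<longrightarrow> min_zero (phi n) = min_zero (cheb_Ue n)) \<and>
      (odd n \<longrightarrow> min_zero (phi n) = min_zero (S_poly n))" if "2 \<le> n" for n
  proof (cases "even n")
    case True
    then obtain k where "n = 2 * k" "k \<ge> 1"
      using \<open>2 \<le> n\<close> by (auto elim: evenE)
    then show ?thesis
      using min_zero_phi_even[of k] by auto
  next
    case False
    then obtain k where "n = 2 * k + 1" "k \<ge> 1"
      using \<open>2 \<le> n\<close> by (auto elim: oddE)
    then show ?thesis
      using min_zero_phi_odd[of k] by auto
  qed
  then show ?thesis
    using min_zero_phi_0 min_zero_phi_1 by blast
qed

end
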